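(* Let $A=\begin{bmatrix}a&b\\c&d\end{bmatrix}$ be a real $2\times 2$ matrix. Then: (1) $a$ is an interior L-eigenvalue of $A$ if and only if $b=0$ and either $a=d$ or $|a-d|<|c|$; (2) a real number $\lambda\neq a$ is an interior L-eigenvalue of $A$ if and only if $\lambda$ is a (real) root of $t^2-(a+d)t+(ad-bc)$, i.e. $\lambda\in\{\frac{a+d\pm\sqrt{(a-d)^2+4bc}}{2}\}\subseteq\mathbb{R}$, and $|b|<|a-\lambda|$; (3) $\lambda$ is a boundary L-eigenvalue of $A$ if and only if one of the following holds: (a) $\lambda=\frac{(a+d)+(b+c)}{2}$ and $a-d\le c-b$; (b) $\lambda=\frac{(a+d)-(b+c)}{2}$ and $a-d\le b-c$.
   Context: The Lorentz cone in $\mathbb{R}^2$ is $\mathcal{K}=\{(x_1,x_2)^T:\ |x_1|\le x_2\}$. For a real $2\times2$ matrix $A$, a real $\lambda$ is an L-eigenvalue of $A$ if there is a nonzero $x\in\mathcal{K}$ with $(A-\lambda I)x\in\mathcal{K}$ and $x^T(A-\lambda I)x=0$ ($x$ is an associated L-eigenvector). $\lambda$ is an interior L-eigenvalue if it has an associated L-eigenvector in the interior of $\mathcal{K}$, and a boundary L-eigenvalue if it has an associated L-eigenvector on the boundary of $\mathcal{K}$. *)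

theory Defs
  imports "HOL-Analysis.Analysis"
begin

definition lorentz_cone :: "(real^2) set" where
  "lorentz_cone = {x. \<bar>x $ 1\<bar> \<le> x $ 2}"

definition L_eigvec :: "real^2^2 \<Rightarrow> real \<Rightarrow> real^2 \<Rightarrow> bool" where
  "L_eigvec A l x \<longleftrightarrow> x \<noteq> 0 \<and> x \<in> lorentz_cone \<and>
     (A - l *\<^sub>R mat 1) *v x \<in> lorentz_cone \<and> x \<bullet> ((A - l *\<^sub>R mat 1) *v x) = 0"

definition L_eigenvalue :: "real^2^2 \<Rightarrow> real \<Rightarrow> bool" where
  "L_eigenvalue A l \<longleftrightarrow> (\<exists>x. L_eigvec A l x)"

definition interior_L_eigenvalue :: "real^2^2 \<Rightarrow> real \<Rightarrow> bool" where
  "interior_L_eigenvalue A l \<longleftrightarrow> (\<exists>x. L_eigvec A l x \<and> x \<in> interior lorentz_cone)"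

definition boundary_L_eigenvalue :: "real^2^2 \<Rightarrow> real \<Rightarrow> bool" where
  "boundary_L_eigenvalue A l \<longleftrightarrow> (\<exists>x. L_eigvec A l x \<and> x \<in> frontier lorentz_cone)"

definition mat2 :: "real \<Rightarrow> real \<Rightarrow> real \<Rightarrow> real \<Rightarrow> real^2^2" where
  "mat2 a b c d = vector [vector [a, b], vector [c, d]]"

end

theory Submission
  imports Defs
begin

text \<open>An interior vector x of the Lorentz cone is orthogonal to no nonzero vector of the cone,
  so for an interior L-eigenvector the complementarity condition forces (A - l I) x = 0 and
  interior L-eigenvalues are ordinary eigenvalues with an eigenvector inside the cone.
  The boundary of the cone consists of the two rays through (1,1) and (-1,1), and the
  L-eigenvector conditions are invariant under positive scaling, so the boundary
  L-eigenvalues are read off from these two vectors.\<close>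

lemma inner_real2: "(x::real^2) \<bullet> y = x$1 * y$1 + x$2 * y$2"
  by (simp add: inner_vec_def sum_2)

lemma vec2_eq_iff: "(x::'a^2) = y \<longleftrightarrow> x$1 = y$1 \<and> x$2 = y$2"
  by (metis exhaust_2 vec_eq_iff)

lemma interior_lorentz_cone: "interior lorentz_cone = {x. \<bar>x$1\<bar> < x$2}"
proof
  have "open {x::real^2. \<bar>x$1\<bar> < x$2}"
    by (intro open_Collect_less continuous_intros)
  moreover have "{x::real^2. \<bar>x$1\<bar> < x$2} \<subseteq> lorentz_cone"
    by (auto simp: lorentz_cone_def)
  ultimately show "{x. \<bar>x$1\<bar> < x$2} \<subseteq> interior lorentz_cone"
    using interior_maximal by blast
next
  show "interior lorentz_cone \<subseteq> {x. \<bar>x$1\<bar> < x$2}"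
  proof
    fix x assume "x \<in> interior lorentz_cone"
    then obtain e where e: "e > 0" "ball x e \<subseteq> lorentz_cone"
      using mem_interior by blast
    define y where "y = x - (e/2) *\<^sub>R axis 2 1"
    have "dist x y < e"
      using e by (simp add: y_def dist_norm)
    then have "y \<in> lorentz_cone"
      using e by auto
    then have "\<bar>x$1\<bar> \<le> x$2 - e/2"
      by (simp add: y_def lorentz_cone_def axis_def)
    then show "x \<in> {x. \<bar>x$1\<bar> < x$2}"
      using e by simp
  qed
qed

lemma frontier_lorentz_cone: "frontier lorentz_cone = {x. \<bar>x$1\<bar> = x$2}"
proof -
  have "closed lorentz_cone"
    unfolding lorentz_cone_def by (intro closed_Collect_le continuous_intros)
  then show ?thesis
    unfolding frontier_def interior_lorentz_cone by (auto simp: lorentz_cone_def)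
qed

lemma lorentz_cone_scaleR_iff:
  assumes "t > 0"
  shows "t *\<^sub>R x \<in> lorentz_cone \<longleftrightarrow> x \<in> lorentz_cone"
  using assms by (simp add: lorentz_cone_def abs_mult)

lemma interior_lorentz_cone_orthogonal:
  assumes x: "x \<in> interior lorentz_cone" and y: "y \<in> lorentz_cone" and "x \<bullet> y = 0"
  shows "y = 0"
proof -
  have x': "\<bar>x$1\<bar> < x$2" and y': "\<bar>y$1\<bar> \<le> y$2"
    using x y unfolding interior_lorentz_cone by (auto simp: lorentz_cone_def)
  have "x$2 * \<bar>y$1\<bar> \<le> x$2 * y$2"
    using x' y' by (simp add: mult_left_mono)
  also have "x$2 * y$2 = - (x$1 * y$1)"
    using \<open>x \<bullet> y = 0\<close> by (simp add: inner_real2)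
  also have "\<dots> \<le> \<bar>x$1\<bar> * \<bar>y$1\<bar>"
    by (metis abs_ge_minus_self abs_mult)
  finally have "(x$2 - \<bar>x$1\<bar>) * \<bar>y$1\<bar> \<le> 0"
    by (simp add: algebra_simps)
  then have "y$1 = 0"
    using x' by (simp add: mult_le_0_iff)
  then show "y = 0"
    using \<open>x \<bullet> y = 0\<close> x' by (auto simp: vec2_eq_iff inner_real2)
qed

lemma interior_L_eigenvalue_iff_eigenvector:
  "interior_L_eigenvalue A l \<longleftrightarrow>
     (\<exists>x \<in> interior lorentz_cone. (A - l *\<^sub>R mat 1) *v x = 0)"
proof
  assume "interior_L_eigenvalue A l"
  then obtain x where "L_eigvec A l x" "x \<in> interior lorentz_cone"
    unfolding interior_L_eigenvalue_def by blast
  then show "\<exists>x \<in> interior lorentz_cone. (A - l *\<^sub>R mat 1) *v x = 0"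
    unfolding L_eigvec_def using interior_lorentz_cone_orthogonal by blast
next
  assume "\<exists>x \<in> interior lorentz_cone. (A - l *\<^sub>R mat 1) *v x = 0"
  then obtain x where x: "x \<in> interior lorentz_cone" "(A - l *\<^sub>R mat 1) *v x = 0"
    by blast
  have "x \<noteq> 0" "x \<in> lorentz_cone" "0 \<in> lorentz_cone"
    using x(1) unfolding interior_lorentz_cone by (auto simp: lorentz_cone_def)
  then show "interior_L_eigenvalue A l"
    unfolding interior_L_eigenvalue_def L_eigvec_def using x by auto
qed

lemma L_eigvec_scaleR_iff:
  assumes "t > 0"
  shows "L_eigvec A l (t *\<^sub>R x) \<longleftrightarrow> L_eigvec A l x"
  using assms
  by (simp add: L_eigvec_def lorentz_cone_scaleR_iff matrix_vector_mult_scaleR)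

lemma frontier_lorentz_cone_rays:
  assumes "x \<in> frontier lorentz_cone" "x \<noteq> 0"
  shows "x$2 > 0 \<and> (x = x$2 *\<^sub>R vector [1, 1] \<or> x = x$2 *\<^sub>R vector [-1, 1])"
  using assms by (auto simp: frontier_lorentz_cone vec2_eq_iff abs_if split: if_splits)

lemma boundary_L_eigenvalue_iff_rays:
  "boundary_L_eigenvalue A l \<longleftrightarrow>
     L_eigvec A l (vector [1, 1]) \<or> L_eigvec A l (vector [-1, 1])"
proof
  assume "boundary_L_eigenvalue A l"
  then obtain x where x: "L_eigvec A l x" "x \<in> frontier lorentz_cone"
    unfolding boundary_L_eigenvalue_def by blast
  then have "x \<noteq> 0"
    by (simp add: L_eigvec_def)
  with x show "L_eigvec A l (vector [1, 1]) \<or> L_eigvec A l (vector [-1, 1])"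
    using frontier_lorentz_cone_rays L_eigvec_scaleR_iff by metis
next
  have "vector [1, 1] \<in> frontier lorentz_cone" "vector [-1, 1] \<in> frontier lorentz_cone"
    by (simp_all add: frontier_lorentz_cone)
  then show "L_eigvec A l (vector [1, 1]) \<or> L_eigvec A l (vector [-1, 1])
      \<Longrightarrow> boundary_L_eigenvalue A l"
    unfolding boundary_L_eigenvalue_def by blast
qed

lemma mat2_minus_scaleR_mult [simp]:
  "((mat2 a b c d - l *\<^sub>R mat 1) *v x) $ 1 = (a - l) * x$1 + b * x$2"
  "((mat2 a b c d - l *\<^sub>R mat 1) *v x) $ 2 = c * x$1 + (d - l) * x$2"
  by (simp_all add: mat2_def matrix_vector_mult_def sum_2 mat_def algebra_simps)

lemma interior_L_eigenvalue_mat2_iff: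
  "interior_L_eigenvalue (mat2 a b c d) l \<longleftrightarrow>
     (\<exists>s. \<bar>s\<bar> < 1 \<and> (a - l) * s + b = 0 \<and> c * s + (d - l) = 0)"
  unfolding interior_L_eigenvalue_iff_eigenvector
proof
  assume "\<exists>x \<in> interior lorentz_cone. (mat2 a b c d - l *\<^sub>R mat 1) *v x = 0"
  then obtain x :: "real^2" where x: "\<bar>x$1\<bar> < x$2" "(a - l) * x$1 + b * x$2 = 0" "c * x$1 + (d - l) * x$2 = 0"
    by (auto simp: interior_lorentz_cone vec2_eq_iff)
  have "x$2 > 0"
    using x(1) by linarith
  with x show "\<exists>s. \<bar>s\<bar> < 1 \<and> (a - l) * s + b = 0 \<and> c * s + (d - l) = 0"
    by (intro exI[of _ "x$1 / x$2"]) (auto simp: abs_divide field_simps)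
next
  assume "\<exists>s. \<bar>s\<bar> < 1 \<and> (a - l) * s + b = 0 \<and> c * s + (d - l) = 0"
  then obtain s where "\<bar>s\<bar> < 1" "(a - l) * s + b = 0" "c * s + (d - l) = 0"
    by blast
  then show "\<exists>x \<in> interior lorentz_cone. (mat2 a b c d - l *\<^sub>R mat 1) *v x = 0"
    by (intro bexI[of _ "vector [s, 1]"]) (auto simp: interior_lorentz_cone vec2_eq_iff)
qed

lemma interior_L_eigenvalue_mat2_diagonal:
  "interior_L_eigenvalue (mat2 a b c d) a \<longleftrightarrow> b = 0 \<and> (a = d \<or> \<bar>a - d\<bar> < \<bar>c\<bar>)"
  unfolding interior_L_eigenvalue_mat2_iff
proof
  assume "\<exists>s. \<bar>s\<bar> < 1 \<and> (a - a) * s + b = 0 \<and> c * s + (d - a) = 0"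
  then obtain s where s: "\<bar>s\<bar> < 1" "b = 0" "a - d = c * s"
    by auto
  have "\<bar>a - d\<bar> < \<bar>c\<bar>" if "a \<noteq> d"
  proof -
    have "c \<noteq> 0"
      using s(3) that by auto
    have "\<bar>a - d\<bar> = \<bar>c\<bar> * \<bar>s\<bar>"
      using s(3) by (simp add: abs_mult)
    also have "\<dots> < \<bar>c\<bar>"
      using s(1) \<open>c \<noteq> 0\<close> by simp
    finally show ?thesis .
  qed
  with s(2) show "b = 0 \<and> (a = d \<or> \<bar>a - d\<bar> < \<bar>c\<bar>)"
    by blast
next
  assume "b = 0 \<and> (a = d \<or> \<bar>a - d\<bar> < \<bar>c\<bar>)"
  then consider "b = 0" "a = d" | "b = 0" "\<bar>a - d\<bar> < \<bar>c\<bar>"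
    by blast
  then show "\<exists>s. \<bar>s\<bar> < 1 \<and> (a - a) * s + b = 0 \<and> c * s + (d - a) = 0"
  proof cases
    case 1
    then show ?thesis
      by (intro exI[of _ 0]) simp
  next
    case 2
    then show ?thesis
      by (intro exI[of _ "(a - d) / c"]) (auto simp: abs_divide divide_less_eq)
  qed
qed

lemma interior_L_eigenvalue_mat2_off_diagonal:
  assumes "l \<noteq> a"
  shows "interior_L_eigenvalue (mat2 a b c d) l \<longleftrightarrow>
     l\<^sup>2 - (a + d) * l + (a * d - b * c) = 0 \<and> \<bar>b\<bar> < \<bar>a - l\<bar>"
  unfolding interior_L_eigenvalue_mat2_iff
proof -
  have "a - l \<noteq> 0"
    using assms by simp
  have "(a - l) * s + b = 0 \<longleftrightarrow> s = - b / (a - l)" for s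
    using \<open>a - l \<noteq> 0\<close> by (auto simp: field_simps)
  moreover have "c * (- b / (a - l)) + (d - l) = (l\<^sup>2 - (a + d) * l + (a * d - b * c)) / (a - l)"
    using \<open>a - l \<noteq> 0\<close> by (simp add: field_simps power2_eq_square)
  moreover have "\<bar>- b / (a - l)\<bar> < 1 \<longleftrightarrow> \<bar>b\<bar> < \<bar>a - l\<bar>"
    using \<open>a - l \<noteq> 0\<close> by (simp add: abs_divide divide_less_eq)
  ultimately show "(\<exists>s. \<bar>s\<bar> < 1 \<and> (a - l) * s + b = 0 \<and> c * s + (d - l) = 0) \<longleftrightarrow>
      l\<^sup>2 - (a + d) * l + (a * d - b * c) = 0 \<and> \<bar>b\<bar> < \<bar>a - l\<bar>"
    using \<open>a - l \<noteq> 0\<close> by auto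
qed

lemma L_eigvec_mat2_ray_plus:
  "L_eigvec (mat2 a b c d) l (vector [1, 1]) \<longleftrightarrow> l = ((a + d) + (b + c)) / 2 \<and> a - d \<le> c - b"
  by (auto simp: L_eigvec_def lorentz_cone_def inner_real2 vec2_eq_iff field_simps)

lemma L_eigvec_mat2_ray_minus:
  "L_eigvec (mat2 a b c d) l (vector [-1, 1]) \<longleftrightarrow> l = ((a + d) - (b + c)) / 2 \<and> a - d \<le> b - c"
  by (auto simp: L_eigvec_def lorentz_cone_def inner_real2 vec2_eq_iff field_simps)

theorem theorem3p1:
  fixes a b c d :: real
  defines "A \<equiv> mat2 a b c d"
  shows "(interior_L_eigenvalue A a \<longleftrightarrow> b = 0 \<and> (a = d \<or> \<bar>a - d\<bar> < \<bar>c\<bar>))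
    \<and> (\<forall>l::real. l \<noteq> a \<longrightarrow>
         (interior_L_eigenvalue A l \<longleftrightarrow>
            l\<^sup>2 - (a + d) * l + (a * d - b * c) = 0 \<and> \<bar>b\<bar> < \<bar>a - l\<bar>))
    \<and> (\<forall>l::real. boundary_L_eigenvalue A l \<longleftrightarrow>
         ((l = ((a + d) + (b + c)) / 2 \<and> a - d \<le> c - b) \<or>
          (l = ((a + d) - (b + c)) / 2 \<and> a - d \<le> b - c)))"
  unfolding A_def boundary_L_eigenvalue_iff_rays L_eigvec_mat2_ray_plus L_eigvec_mat2_ray_minus
  using interior_L_eigenvalue_mat2_diagonal interior_L_eigenvalue_mat2_off_diagonal by blast

end
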